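(* Let $k\ge 1$ and let $U$ be a nonempty $k$-unitrade. Then $|U|\ge k+1$, and if $|U|=k+1$ or $|{\rm supp}(U)|=k+1$ then $U$ is equivalent to $W_k$.
   Context: A $k$-unitrade on a finite set $V$ is a set $U$ of $k$-element subsets (blocks) of $V$ such that every $(k-1)$-element subset of $V$ is contained in an even number of blocks of $U$. ${\rm supp}(U)=\bigcup_{u\in U}u$. Two collections $U_1$ of subsets of $V_1$ and $U_2$ of subsets of $V_2$ are equivalent if there is an injection $f:V_1\to V_2$ with $U_2=\{f(u): u\in U_1\}$. $W_k$ denotes the set of all $k$-element subsets of a $(k+1)$-element set. *)

theory Defs
  imports Main
begin

definition unitrade :: "nat \<Rightarrow> 'a set \<Rightarrow> 'a set set \<Rightarrow> bool" where
  "unitrade k V U \<longleftrightarrow> finite V \<and> (\<forall>u\<in>U. u \<subseteq> V \<and> card u = k) \<and>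
     (\<forall>T. T \<subseteq> V \<and> card T = k - 1 \<longrightarrow> even (card {u\<in>U. T \<subseteq> u}))"

definition supp :: "'a set set \<Rightarrow> 'a set" where
  "supp U = \<Union>U"

definition equivalent :: "'a set \<Rightarrow> 'a set set \<Rightarrow> 'b set \<Rightarrow> 'b set set \<Rightarrow> bool" where
  "equivalent V1 U1 V2 U2 \<longleftrightarrow>
     (\<exists>f. inj_on f V1 \<and> f ` V1 \<subseteq> V2 \<and> U2 = (\<lambda>u. f ` u) ` U1)"

definition W :: "nat \<Rightarrow> 'b set \<Rightarrow> 'b set set" where
  "W k X = {u. u \<subseteq> X \<and> card u = k}"

end

theory Submission
  imports Defs
begin

text \<open>Fix a block u. For x \<in> u the (k-1)-set u - {x} lies in u, so by parity it lies in a second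
block g x, and g x meets u exactly in u - {x}. The blocks u and g x (x \<in> u) are pairwise
distinct, so |U| \<ge> k + 1. If |supp U| = k + 1, then U consists of k-subsets of a (k+1)-set,
of which there are only k + 1, so U = W_k(supp U). If |U| = k + 1, then U = {u} \<union> g`u and
g x = (u - {x}) \<union> {y x} with y x \<notin> u; if y x \<noteq> y x' for some x, x', the (k-1)-set
(u - {x, x'}) \<union> {y x} lies in the single block g x, contradicting parity. So all y x agree
and supp U = u \<union> {y}, which has k + 1 elements.\<close>

lemma card_W: "finite S \<Longrightarrow> card (W k S) = card S choose k"
  unfolding W_def by (rule n_subsets)

lemma finite_W: "finite S \<Longrightarrow> finite (W k S)"
  unfolding W_def by (rule finite_subset[of _ "Pow S"]) auto

lemma W_image:
  assumes "inj_on f S"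
  shows "W k (f ` S) = (\<lambda>u. f ` u) ` W k S"
proof (intro equalityI subsetI)
  fix v assume "v \<in> W k (f ` S)"
  then obtain u where "u \<subseteq> S" "v = f ` u" "card v = k"
    unfolding W_def by (auto simp: subset_image_iff)
  moreover have "card (f ` u) = card u"
    using \<open>u \<subseteq> S\<close> assms by (meson card_image inj_on_subset)
  ultimately show "v \<in> (\<lambda>u. f ` u) ` W k S" unfolding W_def by auto
next
  fix v assume "v \<in> (\<lambda>u. f ` u) ` W k S"
  then obtain u where "u \<subseteq> S" "card u = k" "v = f ` u" unfolding W_def by auto
  moreover have "card (f ` u) = card u"
    using \<open>u \<subseteq> S\<close> assms by (meson card_image inj_on_subset)
  ultimately show "v \<in> W k (f ` S)" unfolding W_def by auto
qed

lemma W_equivalent_nat: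
  assumes "finite S"
  shows "\<exists>X :: nat set. finite X \<and> card X = card S \<and> equivalent S (W k S) X (W k X)"
proof -
  obtain f where f: "bij_betw f S {0..<card S}"
    using ex_bij_betw_finite_nat[OF assms] by blast
  then have "inj_on f S" "f ` S = {0..<card S}" by (simp_all add: bij_betw_def)
  then have "equivalent S (W k S) {0..<card S} (W k {0..<card S})"
    unfolding equivalent_def using W_image[of f S k] by (intro exI[of _ f]) simp
  then show ?thesis by (intro exI[of _ "{0..<card S}"]) simp
qed

lemma unitrade_blockD:
  assumes "unitrade k V U" "w \<in> U"
  shows "w \<subseteq> V" "card w = k" "finite w"
  using assms finite_subset[of w V] unfolding unitrade_def by auto

lemma unitrade_evenD:
  assumes "unitrade k V U" "T \<subseteq> V" "card T = k - 1"
  shows "even (card {w\<in>U. T \<subseteq> w})"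
  using assms unfolding unitrade_def by blast

lemma unitrade_finite:
  assumes "unitrade k V U"
  shows "finite U" "finite (supp U)"
proof -
  have "U \<subseteq> Pow V" "finite V" using assms unfolding unitrade_def by auto
  then show "finite U" "finite (supp U)"
    unfolding supp_def by (auto intro: finite_subset)
qed

lemma unitrade_subset_W_supp: "unitrade k V U \<Longrightarrow> U \<subseteq> W k (supp U)"
  unfolding unitrade_def W_def supp_def by auto

lemma unitrade_neighbour:
  assumes U: "unitrade k V U" and "u \<in> U" "x \<in> u"
  shows "\<exists>w\<in>U. w \<noteq> u \<and> w \<inter> u = u - {x}"
proof -
  note u = unitrade_blockD[OF U \<open>u \<in> U\<close>]
  have "u - {x} \<subseteq> V" "card (u - {x}) = k - 1" using u \<open>x \<in> u\<close> by auto
  then have "even (card {w\<in>U. u - {x} \<subseteq> w})" by (rule unitrade_evenD[OF U])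
  then have "{w\<in>U. u - {x} \<subseteq> w} \<noteq> {u}" by auto
  then obtain w where w: "w \<in> U" "w \<noteq> u" "u - {x} \<subseteq> w"
    using \<open>u \<in> U\<close> by blast
  have "x \<notin> w"
  proof
    assume "x \<in> w"
    then have "u \<subseteq> w" using w(3) by blast
    then show False
      using w(2) u unitrade_blockD[OF U w(1)] by (metis card_subset_eq)
  qed
  then show ?thesis using w by blast
qed

lemma unitrade_obtain_neighbours:
  assumes "unitrade k V U" "u \<in> U"
  obtains g where "\<And>x. x \<in> u \<Longrightarrow> g x \<in> U \<and> g x \<noteq> u \<and> g x \<inter> u = u - {x}"
  using unitrade_neighbour[OF assms] by metis

lemma card_insert_neighbours:
  assumes "finite u" and g: "\<And>x. x \<in> u \<Longrightarrow> g x \<noteq> u \<and> g x \<inter> u = u - {x}"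
  shows "card (insert u (g ` u)) = card u + 1"
proof -
  have "inj_on g u"
  proof
    fix x x' assume "x \<in> u" "x' \<in> u" "g x = g x'"
    then have "u - {x} = u - {x'}" using g by metis
    then show "x = x'" using \<open>x \<in> u\<close> \<open>x' \<in> u\<close> by blast
  qed
  moreover have "u \<notin> g ` u" using g by blast
  ultimately show ?thesis using \<open>finite u\<close> by (simp add: card_image)
qed

lemma unitrade_card_ge:
  assumes U: "unitrade k V U" and "U \<noteq> {}"
  shows "k + 1 \<le> card U"
proof -
  obtain u where "u \<in> U" using \<open>U \<noteq> {}\<close> by blast
  then obtain g where g: "\<And>x. x \<in> u \<Longrightarrow> g x \<in> U \<and> g x \<noteq> u \<and> g x \<inter> u = u - {x}"
    using unitrade_obtain_neighbours[OF U] by blast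
  note u = unitrade_blockD[OF U \<open>u \<in> U\<close>]
  have "card (insert u (g ` u)) = k + 1"
    using card_insert_neighbours[OF u(3)] g u(2) by metis
  moreover have "insert u (g ` u) \<subseteq> U" using \<open>u \<in> U\<close> g by blast
  ultimately show ?thesis using card_mono[OF unitrade_finite(1)[OF U]] by metis
qed

lemma unitrade_eq_W_supp:
  assumes U: "unitrade k V U" and "U \<noteq> {}" and "card (supp U) = k + 1"
  shows "U = W k (supp U)"
proof -
  have "finite (W k (supp U))" "card (W k (supp U)) = k + 1"
    using finite_W[of "supp U"] card_W[of "supp U"] unitrade_finite(2)[OF U] assms(3)
    by simp_all
  then show ?thesis
    using card_seteq unitrade_subset_W_supp[OF U] unitrade_card_ge[OF U \<open>U \<noteq> {}\<close>] by metis
qed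

lemma eq_insert_if_Int_eq_remove:
  assumes "finite w" "finite u" "card w = card u" "w \<inter> u = u - {x}" "x \<in> u"
  shows "\<exists>y. y \<notin> u \<and> w = insert y (u - {x})"
proof -
  have "0 < card u" using assms(2,5) card_gt_0_iff by blast
  then have "card (w - u) = 1"
    using assms by (simp add: card_Diff_subset_Int)
  then obtain y where "w - u = {y}" by (rule card_1_singletonE)
  then show ?thesis using assms(4) by blast
qed

lemma unitrade_exchange_points_agree:
  assumes U: "unitrade k V U" and Ueq: "U = insert u (g ` u)"
    and g: "\<And>x. x \<in> u \<Longrightarrow> y x \<notin> u \<and> g x = insert (y x) (u - {x})"
    and x: "x \<in> u" and x': "x' \<in> u"
  shows "y x = y x'"
proof (rule ccontr)
  assume ne: "y x \<noteq> y x'"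
  then have "x \<noteq> x'" by auto
  define T where "T = insert (y x) (u - {x, x'})"
  have "u \<in> U" "g x \<in> U" using Ueq x by auto
  note u = unitrade_blockD[OF U \<open>u \<in> U\<close>]
  have "card {x, x'} \<le> k"
    using card_mono[OF u(3), of "{x, x'}"] u(2) x x' by simp
  then have "card (u - {x, x'}) + 2 = k"
    using u x x' \<open>x \<noteq> x'\<close> by (simp add: card_Diff_subset)
  then have "card T = k - 1" unfolding T_def using u(3) g[OF x] by simp
  moreover have "T \<subseteq> g x" using g[OF x] unfolding T_def by blast
  then have "T \<subseteq> V" using unitrade_blockD(1)[OF U \<open>g x \<in> U\<close>] by blast
  ultimately have "even (card {w\<in>U. T \<subseteq> w})" using unitrade_evenD[OF U] by blast
  moreover have "{w\<in>U. T \<subseteq> w} = {g x}"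
  proof -
    have "\<not> T \<subseteq> u" using g[OF x] unfolding T_def by blast
    moreover have "z = x" if "z \<in> u" "T \<subseteq> g z" for z
    proof -
      have "z \<notin> g z" using g[OF \<open>z \<in> u\<close>] \<open>z \<in> u\<close> by auto
      then have "z \<in> {x, x'}" using that unfolding T_def by blast
      moreover have "y x \<in> g z" using that unfolding T_def by blast
      ultimately show "z = x" using g[OF x] g[OF x'] ne by blast
    qed
    ultimately have "w = g x" if "w \<in> U" "T \<subseteq> w" for w
      using that Ueq by blast
    then show ?thesis using \<open>g x \<in> U\<close> \<open>T \<subseteq> g x\<close> by blast
  qed
  ultimately show False by simp
qed

lemma unitrade_card_supp_if_card_eq:
  assumes U: "unitrade k V U" and "1 \<le> k" and card_U: "card U = k + 1"
  shows "card (supp U) = k + 1"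
proof -
  obtain u where "u \<in> U" using card_U by fastforce
  then obtain g where g: "\<And>x. x \<in> u \<Longrightarrow> g x \<in> U \<and> g x \<noteq> u \<and> g x \<inter> u = u - {x}"
    using unitrade_obtain_neighbours[OF U] by blast
  note u = unitrade_blockD[OF U \<open>u \<in> U\<close>]
  have "card (insert u (g ` u)) = card U"
    using card_insert_neighbours[OF u(3)] g u(2) card_U by metis
  moreover have "insert u (g ` u) \<subseteq> U" using \<open>u \<in> U\<close> g by blast
  ultimately have Ueq: "U = insert u (g ` u)"
    using card_subset_eq[OF unitrade_finite(1)[OF U]] by metis
  have "\<exists>y. y \<notin> u \<and> g x = insert y (u - {x})" if "x \<in> u" for x
  proof (rule eq_insert_if_Int_eq_remove)
    have "g x \<in> U" using g[OF that] by blast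
    then show "finite (g x)" "card (g x) = card u"
      using unitrade_blockD[OF U] u(2) by auto
  qed (use g[OF that] that u in auto)
  then obtain y where y: "\<And>x. x \<in> u \<Longrightarrow> y x \<notin> u \<and> g x = insert (y x) (u - {x})"
    by metis
  obtain x0 where "x0 \<in> u" using u \<open>1 \<le> k\<close> by fastforce
  have "g x = insert (y x0) (u - {x})" if "x \<in> u" for x
    using y[OF that] unitrade_exchange_points_agree[OF U Ueq y that \<open>x0 \<in> u\<close>] by simp
  then have "supp U = insert (y x0) u"
    unfolding supp_def Ueq using \<open>x0 \<in> u\<close> by auto
  then show ?thesis using u y[OF \<open>x0 \<in> u\<close>] by simp
qed

theorem proposition9:
  fixes V :: "'a set" and U :: "'a set set" and k :: nat
  assumes "k \<ge> 1" and "unitrade k V U" and "U \<noteq> {}"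
  shows "card U \<ge> k + 1 \<and>
    ((card U = k + 1 \<or> card (supp U) = k + 1) \<longrightarrow>
      (\<exists>X :: nat set. finite X \<and> card X = k + 1 \<and>
         equivalent (supp U) U X (W k X)))"
proof -
  have "\<exists>X :: nat set. finite X \<and> card X = k + 1 \<and> equivalent (supp U) U X (W k X)"
    if "card U = k + 1 \<or> card (supp U) = k + 1"
  proof -
    have supp: "card (supp U) = k + 1"
      using that unitrade_card_supp_if_card_eq assms by blast
    then have "U = W k (supp U)" using unitrade_eq_W_supp assms by blast
    then show ?thesis using W_equivalent_nat unitrade_finite(2) assms supp by metis
  qed
  then show ?thesis using unitrade_card_ge assms by blast
qed

end
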